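(* Let $N\ge2$, $l\ge2$, $\sigma\in\mathfrak S_{N,l}$, let $J\in\{1,\dots,N\}^k$ be nonperiodic and let $f\in\mathrm{BFS}_N(\Lambda)$ be $P(J)$. Let $Q_J=[p_1]\sqcup\cdots\sqcup[p_M]$ be the orbit decomposition of $Q_J$. Then $\Lambda=\Lambda(p_1)\sqcup\cdots\sqcup\Lambda(p_M)$ (disjoint union) and $f^{(\sigma)}=f^{[1]}\oplus\cdots\oplus f^{[M]}$ as branching function systems, where $f^{[i]}=f^{(\sigma)}|_{\Lambda(p_i)}$.
   Context: Branching function systems: for an infinite set $\Lambda$, $f=\{f_i\}_{i=1}^N\in\mathrm{BFS}_N(\Lambda)$ means each $f_i$ is injective on $\Lambda$ and $f_1(\Lambda),\dots,f_N(\Lambda)$ partition $\Lambda$. $f_J=f_{j_1}\circ\cdots\circ f_{j_k}$, $f_0=\mathrm{id}$. $x\sim y$ iff $f_{J_1}(z)=x$, $f_{J_2}(z)=y$ for some words $J_1,J_2$ (possibly empty) and $z$; $A_f(x)=\{y:x\sim y\}$; $f$ is cyclic if $\Lambda=A_f(x)$ for some $x$; $f$ is $P(J)$ ($J=(j_1,\dots,j_k)$) if $f$ is cyclic and there are distinct $n_1,\dots,n_k$ with $f_{j_1}(n_1)=n_k$, $f_{j_2}(n_2)=n_1,\dots,f_{j_k}(n_k)=n_{k-1}$. The direct sum $f=\bigoplus_\omega f^{[\omega]}$ means $\Lambda=\coprod_\omega\Lambda_\omega$, each $\Lambda_\omega$ invariant under all $f_i$, and $f^{[\omega]}=f|_{\Lambda_\omega}\in\mathrm{BFS}_N(\Lambda_\omega)$.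 For $\sigma\in\mathfrak S_{N,l}$ (permutations of $\{1,\dots,N\}^l$), $f^{(\sigma)}_i(f_K(n))=f_{\sigma(i,K)}(n)$ for $K\in\{1,\dots,N\}^{l-1}$. $J$ nonperiodic: not an $r$-fold concatenation of a word with $r\ge2$. Semi-Mealy machine by $\sigma$: states $q_K$ ($K\in\{1,\dots,N\}^{l-1}$), inputs $a_i$; with $\sigma^{-1}(K,i)=(y_1,\dots,y_l)$, $\delta(q_K,a_i)=q_{(y_2,\dots,y_l)}$, extended by $\delta(q,wa)=\delta(\delta(q,w),a)$; $a_J=a_{j_1}\cdots a_{j_k}$. $Q_J=\{q:\delta(q,(a_J)^n)=q$ for some $n\ge1\}$, $q\sim q'$ iff $\delta(q,(a_J)^n)=q'$ for some $n\ge1$, $[q]$ its class. Definition of $\Lambda(p)$: let $n_0$ be the unique point with $f_J(n_0)=n_0$. For $p\in Q_J$ let $r=\#[p]$, $\alpha=rk$, extend $J$ periodically ($j_{k(c-1)+i}=j_i$), set $p_1=p$, $p_i=\delta(p_{i-1},a_{j_{i-1}})$ ($2\le i\le\alpha$), write $p_\alpha=q_{I_\alpha}$, let $m(p)=f_{(I_\alpha,j_\alpha)}(n_0)$ and $\Lambda(p)=A_{f^{(\sigma)}}(m(p))$. *)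

theory Defs
  imports Main
begin

definition words :: "nat \<Rightarrow> nat \<Rightarrow> nat list set" where
  "words N n = {w. length w = n \<and> set w \<subseteq> {1..N}}"

fun fw :: "(nat \<Rightarrow> 'a \<Rightarrow> 'a) \<Rightarrow> nat list \<Rightarrow> 'a \<Rightarrow> 'a" where
  "fw f [] = id"
| "fw f (j # J) = f j \<circ> fw f J"

definition BFS :: "nat \<Rightarrow> 'a set \<Rightarrow> (nat \<Rightarrow> 'a \<Rightarrow> 'a) \<Rightarrow> bool" where
  "BFS N L f \<longleftrightarrow> infinite L
     \<and> (\<forall>i\<in>{1..N}. inj_on (f i) L \<and> f i ` L \<subseteq> L)
     \<and> (\<forall>i\<in>{1..N}. \<forall>j\<in>{1..N}. i \<noteq> j \<longrightarrow> f i ` L \<inter> f j ` L = {})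
     \<and> (\<Union>i\<in>{1..N}. f i ` L) = L"

definition equiv_bfs :: "nat \<Rightarrow> 'a set \<Rightarrow> (nat \<Rightarrow> 'a \<Rightarrow> 'a) \<Rightarrow> 'a \<Rightarrow> 'a \<Rightarrow> bool" where
  "equiv_bfs N L f x y \<longleftrightarrow> (\<exists>z\<in>L. \<exists>J1 J2. set J1 \<subseteq> {1..N} \<and> set J2 \<subseteq> {1..N}
       \<and> fw f J1 z = x \<and> fw f J2 z = y)"

definition Aset :: "nat \<Rightarrow> 'a set \<Rightarrow> (nat \<Rightarrow> 'a \<Rightarrow> 'a) \<Rightarrow> 'a \<Rightarrow> 'a set" where
  "Aset N L f x = {y \<in> L. equiv_bfs N L f x y}"

definition cyclic :: "nat \<Rightarrow> 'a set \<Rightarrow> (nat \<Rightarrow> 'a \<Rightarrow> 'a) \<Rightarrow> bool" where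
  "cyclic N L f \<longleftrightarrow> (\<exists>x\<in>L. L = Aset N L f x)"

text \<open>f is P(J), J = [j_1,...,j_k]: j_i = J ! (i-1).\<close>
definition isP :: "nat \<Rightarrow> 'a set \<Rightarrow> (nat \<Rightarrow> 'a \<Rightarrow> 'a) \<Rightarrow> nat list \<Rightarrow> bool" where
  "isP N L f J \<longleftrightarrow> cyclic N L f \<and>
     (\<exists>n :: nat \<Rightarrow> 'a. inj_on n {1..length J} \<and> n ` {1..length J} \<subseteq> L
        \<and> f (J ! 0) (n 1) = n (length J)
        \<and> (\<forall>i\<in>{2..length J}. f (J ! (i - 1)) (n i) = n (i - 1)))"

definition nonperiodic :: "nat list \<Rightarrow> bool" where
  "nonperiodic J \<longleftrightarrow> \<not> (\<exists>w r. r \<ge> 2 \<and> J = concat (replicate r w))"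

definition perm_words :: "nat \<Rightarrow> nat \<Rightarrow> (nat list \<Rightarrow> nat list) \<Rightarrow> bool" where
  "perm_words N l \<sigma> \<longleftrightarrow> bij_betw \<sigma> (words N l) (words N l)"

definition fsig :: "nat \<Rightarrow> 'a set \<Rightarrow> (nat \<Rightarrow> 'a \<Rightarrow> 'a) \<Rightarrow> nat \<Rightarrow> (nat list \<Rightarrow> nat list)
                      \<Rightarrow> nat \<Rightarrow> 'a \<Rightarrow> 'a" where
  "fsig N L f l \<sigma> i x = (THE y. \<exists>K n. K \<in> words N (l - 1) \<and> n \<in> L \<and> x = fw f K n
                                  \<and> y = fw f (\<sigma> (i # K)) n)"

text \<open>Semi-Mealy machine: state q_K is represented by K.
  delta(q_K, a_i) = q_(y2..yl) where sigma^-1(K,i) = (y1,...,yl).\<close>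
definition delta :: "nat \<Rightarrow> nat \<Rightarrow> (nat list \<Rightarrow> nat list) \<Rightarrow> nat list \<Rightarrow> nat \<Rightarrow> nat list" where
  "delta N l \<sigma> K i = tl (inv_into (words N l) \<sigma> (K @ [i]))"

definition deltaw :: "nat \<Rightarrow> nat \<Rightarrow> (nat list \<Rightarrow> nat list) \<Rightarrow> nat list \<Rightarrow> nat list \<Rightarrow> nat list" where
  "deltaw N l \<sigma> K w = foldl (delta N l \<sigma>) K w"

definition QJ :: "nat \<Rightarrow> nat \<Rightarrow> (nat list \<Rightarrow> nat list) \<Rightarrow> nat list \<Rightarrow> nat list set" where
  "QJ N l \<sigma> J = {q \<in> words N (l - 1). \<exists>n\<ge>1. deltaw N l \<sigma> q (concat (replicate n J)) = q}"

definition qclass :: "nat \<Rightarrow> nat \<Rightarrow> (nat list \<Rightarrow> nat list) \<Rightarrow> nat list \<Rightarrow> nat list \<Rightarrow> nat list set" where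
  "qclass N l \<sigma> J q = {q'. \<exists>n\<ge>1. deltaw N l \<sigma> q (concat (replicate n J)) = q'}"

fun pseq :: "nat \<Rightarrow> nat \<Rightarrow> (nat list \<Rightarrow> nat list) \<Rightarrow> nat list \<Rightarrow> nat list \<Rightarrow> nat \<Rightarrow> nat list" where
  "pseq N l \<sigma> J p 0 = p"
| "pseq N l \<sigma> J p (Suc 0) = p"
| "pseq N l \<sigma> J p (Suc (Suc i)) =
     delta N l \<sigma> (pseq N l \<sigma> J p (Suc i)) (J ! (i mod length J))"

definition Jext :: "nat list \<Rightarrow> nat \<Rightarrow> nat" where
  "Jext J i = J ! ((i - 1) mod length J)"

definition mpt :: "nat \<Rightarrow> 'a set \<Rightarrow> (nat \<Rightarrow> 'a \<Rightarrow> 'a) \<Rightarrow> nat \<Rightarrow> (nat list \<Rightarrow> nat list)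
                     \<Rightarrow> nat list \<Rightarrow> nat list \<Rightarrow> 'a" where
  "mpt N L f l \<sigma> J p =
     (let n0 = (THE n. n \<in> L \<and> fw f J n = n);
          \<alpha> = card (qclass N l \<sigma> J p) * length J
      in fw f (pseq N l \<sigma> J p \<alpha> @ [Jext J \<alpha>]) n0)"

definition Lam :: "nat \<Rightarrow> 'a set \<Rightarrow> (nat \<Rightarrow> 'a \<Rightarrow> 'a) \<Rightarrow> nat \<Rightarrow> (nat list \<Rightarrow> nat list)
                     \<Rightarrow> nat list \<Rightarrow> nat list \<Rightarrow> 'a set" where
  "Lam N L f l \<sigma> J p = Aset N L (fsig N L f l \<sigma>) (mpt N L f l \<sigma> J p)"

definition direct_sum :: "nat \<Rightarrow> 'a set \<Rightarrow> (nat \<Rightarrow> 'a \<Rightarrow> 'a) \<Rightarrow> 'b set \<Rightarrow> ('b \<Rightarrow> 'a set) \<Rightarrow> bool" where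
  "direct_sum N L g I Ls \<longleftrightarrow> L = (\<Union>\<omega>\<in>I. Ls \<omega>)
     \<and> (\<forall>\<omega>\<in>I. \<forall>\<omega>'\<in>I. \<omega> \<noteq> \<omega>' \<longrightarrow> Ls \<omega> \<inter> Ls \<omega>' = {})
     \<and> (\<forall>\<omega>\<in>I. \<forall>i\<in>{1..N}. g i ` Ls \<omega> \<subseteq> Ls \<omega>)
     \<and> (\<forall>\<omega>\<in>I. BFS N (Ls \<omega>) g)"

end

(*
  Since J is nonperiodic, the P(J) system f has a unique fixed point n0 of f_J; every point
  of L is f_w(n0), and f_u(n0) = n0 only when u is a power of J.  Write points as f_K(z) with K
  a state (a word of length l - 1).  The semi-Mealy machine of sigma describes f^(sigma) on such
  representations: f^(sigma)_y maps f_(delta(K,i))(z) to f_K(f_i z) when sigma(y, delta(K,i)) = (K,i).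
  Hence every x is f^(sigma)-equivalent to some f_q(n0), and appending powers of J moves q along
  its orbit under delta(-, a_J), which ends in a cycle, i.e. in Q_J; likewise m(p) is equivalent
  to f_p(n0).  Conversely, lifting an f^(sigma)-path between f_p(n0) and f_p'(n0) back to f and
  completing it to powers of J shows that p and p' reach a common state, so [p] = [p'].  The
  sets Lambda(p_i) are therefore exactly the f^(sigma)-equivalence classes.
*)

theory Submission
  imports Defs "HOL-Combinatorics.Orbits"
begin

lemma fw_append: "fw f (U @ V) = fw f U \<circ> fw f V"
  by (induction U) auto

lemma fw_append_apply: "fw f (U @ V) x = fw f U (fw f V x)"
  by (simp add: fw_append)

lemma deltaw_Nil: "deltaw N l \<sigma> K [] = K"
  by (simp add: deltaw_def)

lemma deltaw_Cons: "deltaw N l \<sigma> K (i # w) = deltaw N l \<sigma> (delta N l \<sigma> K i) w"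
  by (simp add: deltaw_def)

lemma deltaw_append: "deltaw N l \<sigma> K (u @ v) = deltaw N l \<sigma> (deltaw N l \<sigma> K u) v"
  by (simp add: deltaw_def)

lemma finite_words: "finite (words N n)"
  using finite_lists_length_eq[of "{1..N}" n] unfolding words_def by (simp add: conj_commute)

abbreviation word_power :: "nat list \<Rightarrow> nat \<Rightarrow> nat list" where
  "word_power J n \<equiv> concat (replicate n J)"

lemma word_power_Suc: "word_power J (Suc n) = word_power J n @ J"
  by (induction n) auto

lemma length_word_power: "length (word_power J n) = n * length J"
  by (induction n) (auto simp: word_power_Suc)

lemma set_word_power_subset: "set (word_power J n) \<subseteq> set J"
  by (induction n) (auto simp: word_power_Suc)

lemma fw_word_power_fixed: "fw f J c = c \<Longrightarrow> fw f (word_power J n) c = c"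
  by (induction n) (auto simp: word_power_Suc fw_append)

lemma map_Jext_word_power: "map (Jext J) [1..<Suc (r * length J)] = word_power J r"
proof (induction r)
  case (Suc r)
  let ?k = "length J"
  have "[1..<Suc (r * ?k) + ?k] = [1..<Suc (r * ?k)] @ [Suc (r * ?k)..<Suc (r * ?k) + ?k]"
    by (rule upt_add_eq_append) simp
  moreover have "Suc (Suc r * ?k) = Suc (r * ?k) + ?k" by simp
  moreover have "map (Jext J) [Suc (r * ?k)..<Suc (r * ?k) + ?k] = J"
    by (rule nth_equalityI) (simp_all add: Jext_def del: upt_Suc)
  ultimately show ?case by (simp only: Suc.IH word_power_Suc map_append)
qed simp

lemma pseq_Suc: "pseq N l \<sigma> J p (Suc m) = deltaw N l \<sigma> p (map (Jext J) [1..<Suc m])"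
  by (induction m) (simp_all add: deltaw_Nil deltaw_append deltaw_Cons Jext_def)

lemma nonperiodic_nonempty: "nonperiodic J \<Longrightarrow> J \<noteq> []"
  unfolding nonperiodic_def by (metis concat_replicate_trivial le_refl)

lemma nonperiodic_rotate:
  assumes "nonperiodic J" and "rotate s J = J"
  shows "s mod length J = 0"
proof (rule ccontr)
  let ?t = "s mod length J"
  assume t: "?t \<noteq> 0"
  have "take ?t J @ drop ?t J = drop ?t J @ take ?t J"
    using assms(2) by (simp add: rotate_drop_take)
  then obtain m n zs where mn: "concat (replicate m zs) = take ?t J" "concat (replicate n zs) = drop ?t J"
    using comm_append_are_replicate by blast
  have "?t < length J" using nonperiodic_nonempty[OF assms(1)] by simp
  then have "take ?t J \<noteq> []" "drop ?t J \<noteq> []" using t by auto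
  then have "m \<noteq> 0" "n \<noteq> 0" using mn by (metis concat.simps(1) replicate_0)+
  moreover have "J = concat (replicate (m + n) zs)" using mn by (simp add: replicate_add)
  ultimately show False using assms(1) unfolding nonperiodic_def
    by (metis add_mono one_add_one less_one not_le)
qed

lemma funpow_card_orbit:
  assumes "x \<in> orbit f x"
  shows "(f ^^ card (orbit f x)) x = x"
proof -
  have "card (orbit f x) = funpow_dist1 f x x"
    using orbit_conv_funpow_dist1[OF assms] card_image[OF inj_on_funpow_dist1[OF assms]] by simp
  then show ?thesis using funpow_dist1_prop[OF assms] by simp
qed

lemma funpow_eventually_in_own_orbit:
  assumes "finite A" and "\<And>n. (f ^^ n) x \<in> A"
  shows "\<exists>a. (f ^^ a) x \<in> orbit f ((f ^^ a) x)"
proof -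
  have "\<not> inj (\<lambda>n. (f ^^ n) x)"
    using assms finite_subset[of "range (\<lambda>n. (f ^^ n) x)" A] finite_imageD by blast
  then obtain a b where ab: "a < b" "(f ^^ a) x = (f ^^ b) x"
    unfolding inj_def by (metis linorder_neqE_nat)
  have "(f ^^ (b - a)) ((f ^^ a) x) = (f ^^ (b - a + a)) x"
    by (simp add: funpow_add)
  then have "(f ^^ (b - a)) ((f ^^ a) x) = (f ^^ a) x" and "0 < b - a"
    using ab by simp_all
  then show ?thesis unfolding orbit_altdef by (intro exI[of _ a] CollectI exI[of _ "b - a"]) simp
qed

section \<open>Branching function systems\<close>

locale branching_system =
  fixes N :: nat and L :: "'a set" and f :: "nat \<Rightarrow> 'a \<Rightarrow> 'a"
  assumes BFS: "BFS N L f"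
begin

lemma branch_inj: "i \<in> {1..N} \<Longrightarrow> inj_on (f i) L"
  using BFS by (simp add: BFS_def)

lemma branch_closed: "i \<in> {1..N} \<Longrightarrow> x \<in> L \<Longrightarrow> f i x \<in> L"
  using BFS unfolding BFS_def by blast

lemma branch_disjoint:
  "i \<in> {1..N} \<Longrightarrow> j \<in> {1..N} \<Longrightarrow> x \<in> L \<Longrightarrow> y \<in> L \<Longrightarrow> f i x = f j y \<Longrightarrow> i = j"
  using BFS unfolding BFS_def by blast

lemma branch_cover: "x \<in> L \<Longrightarrow> \<exists>i\<in>{1..N}. \<exists>y\<in>L. x = f i y"
  using BFS unfolding BFS_def by blast

lemma fw_closed: "set U \<subseteq> {1..N} \<Longrightarrow> x \<in> L \<Longrightarrow> fw f U x \<in> L"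
  by (induction U) (auto intro: branch_closed)

lemma fw_eq_imp_eq:
  assumes "set U \<subseteq> {1..N}" "set V \<subseteq> {1..N}" "length U = length V" "x \<in> L" "y \<in> L"
    and "fw f U x = fw f V y"
  shows "U = V \<and> x = y"
  using assms
proof (induction U arbitrary: V)
  case (Cons i U)
  then obtain j V' where V: "V = j # V'" by (cases V) auto
  have ij: "i \<in> {1..N}" "j \<in> {1..N}" using Cons V by auto
  have in_L: "fw f U x \<in> L" "fw f V' y \<in> L" using Cons V fw_closed by auto
  have eq: "f i (fw f U x) = f j (fw f V' y)" using Cons V by simp
  then have "i = j" using branch_disjoint[OF ij in_L] by blast
  then have "fw f U x = fw f V' y" using eq branch_inj[OF ij(1)] in_L by (auto dest: inj_onD)
  then show ?case using Cons.IH[of V'] Cons.prems V \<open>i = j\<close> by auto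
qed simp

lemma fw_words_closed: "K \<in> words N n \<Longrightarrow> x \<in> L \<Longrightarrow> fw f K x \<in> L"
  using fw_closed by (simp add: words_def)

lemma fw_words_eq_imp_eq:
  "K \<in> words N n \<Longrightarrow> K' \<in> words N n \<Longrightarrow> y \<in> L \<Longrightarrow> y' \<in> L
    \<Longrightarrow> fw f K y = fw f K' y' \<Longrightarrow> K = K' \<and> y = y'"
  using fw_eq_imp_eq by (auto simp: words_def)

lemma fw_eq_imp_prefix:
  assumes "set U \<subseteq> {1..N}" "set V \<subseteq> {1..N}" "length U \<le> length V" "x \<in> L" "y \<in> L"
    and "fw f U x = fw f V y"
  shows "U = take (length U) V \<and> x = fw f (drop (length U) V) y"
proof -
  have "fw f V y = fw f (take (length U) V) (fw f (drop (length U) V) y)"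
    by (metis fw_append_apply append_take_drop_id)
  moreover have "set (take (length U) V) \<subseteq> {1..N}" "set (drop (length U) V) \<subseteq> {1..N}"
    using assms(2) by (meson order_trans set_take_subset set_drop_subset)+
  ultimately show ?thesis
    using fw_eq_imp_eq[OF assms(1) _ _ assms(4) fw_closed] assms(3,5,6) by auto
qed

lemma exists_fw_ancestor:
  "x \<in> L \<Longrightarrow> \<exists>U y. length U = n \<and> set U \<subseteq> {1..N} \<and> y \<in> L \<and> x = fw f U y"
proof (induction n)
  case 0
  then show ?case by (intro exI[of _ "[]"] exI[of _ x]) simp
next
  case (Suc n)
  then obtain U y where U: "length U = n" "set U \<subseteq> {1..N}" "y \<in> L" "x = fw f U y" by blast
  obtain i y' where "i \<in> {1..N}" "y' \<in> L" "y = f i y'" using branch_cover[OF U(3)] by blast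
  then show ?case using U by (intro exI[of _ "U @ [i]"] exI[of _ y']) (auto simp: fw_append)
qed

lemma equiv_refl: "x \<in> L \<Longrightarrow> equiv_bfs N L f x x"
  unfolding equiv_bfs_def by (intro bexI[of _ x] exI[of _ "[]"]) auto

lemma equiv_sym: "equiv_bfs N L f x y \<Longrightarrow> equiv_bfs N L f y x"
  unfolding equiv_bfs_def by blast

lemma equiv_fw: "z \<in> L \<Longrightarrow> set U \<subseteq> {1..N} \<Longrightarrow> equiv_bfs N L f (fw f U z) z"
  unfolding equiv_bfs_def by (intro bexI[of _ z] exI[of _ U] exI[of _ "[]"]) auto

text \<open>Two common ancestors of y are comparable by unique factorisation, so the longer path
  to y passes through the other ancestor.\<close>

lemma equiv_trans:
  assumes "equiv_bfs N L f x y" "equiv_bfs N L f y w"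
  shows "equiv_bfs N L f x w"
proof -
  obtain z A B where z: "z \<in> L" "set A \<subseteq> {1..N}" "set B \<subseteq> {1..N}" "fw f A z = x" "fw f B z = y"
    using assms(1) unfolding equiv_bfs_def by blast
  obtain z' C D where z': "z' \<in> L" "set C \<subseteq> {1..N}" "set D \<subseteq> {1..N}" "fw f C z' = y" "fw f D z' = w"
    using assms(2) unfolding equiv_bfs_def by blast
  show ?thesis
  proof (cases "length B \<le> length C")
    case True
    then have "z = fw f (drop (length B) C) z'"
      using fw_eq_imp_prefix[OF z(3) z'(2) True z(1) z'(1)] z(5) z'(4) by auto
    moreover have "set (drop (length B) C) \<subseteq> {1..N}"
      using z'(2) by (meson order_trans set_drop_subset)
    ultimately show ?thesis unfolding equiv_bfs_def using z z'
      by (intro bexI[of _ z'] exI[of _ "A @ drop (length B) C"] exI[of _ D]) (auto simp: fw_append)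
  next
    case False
    then have "z' = fw f (drop (length C) B) z"
      using fw_eq_imp_prefix[OF z'(2) z(3) _ z'(1) z(1)] z(5) z'(4) by auto
    moreover have "set (drop (length C) B) \<subseteq> {1..N}"
      using z(3) by (meson order_trans set_drop_subset)
    ultimately show ?thesis unfolding equiv_bfs_def using z z'
      by (intro bexI[of _ z] exI[of _ A] exI[of _ "D @ drop (length C) B"]) (auto simp: fw_append)
  qed
qed

lemma Aset_subset: "Aset N L f x \<subseteq> L"
  unfolding Aset_def by auto

lemma Aset_closed:
  assumes "y \<in> Aset N L f x" and "i \<in> {1..N}"
  shows "f i y \<in> Aset N L f x"
proof -
  have "y \<in> L" and "equiv_bfs N L f x y" using assms(1) unfolding Aset_def by auto
  moreover have "equiv_bfs N L f y (f i y)" using equiv_sym equiv_fw[OF \<open>y \<in> L\<close>, of "[i]"] assms(2) by simp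
  ultimately show ?thesis using equiv_trans branch_closed[OF assms(2)] unfolding Aset_def by blast
qed

lemma BFS_Aset:
  assumes "N \<ge> 2" and "x \<in> L"
  shows "BFS N (Aset N L f x) f"
proof -
  let ?C = "Aset N L f x"
  have inj: "\<forall>i\<in>{1..N}. inj_on (f i) ?C \<and> f i ` ?C \<subseteq> ?C"
    using branch_inj Aset_subset Aset_closed by (meson image_subsetI inj_on_subset)
  have disjoint: "\<forall>i\<in>{1..N}. \<forall>j\<in>{1..N}. i \<noteq> j \<longrightarrow> f i ` ?C \<inter> f j ` ?C = {}"
    using branch_disjoint Aset_subset by blast
  have "?C \<subseteq> (\<Union>i\<in>{1..N}. f i ` ?C)"
  proof
    fix y assume y: "y \<in> ?C"
    obtain i y' where i: "i \<in> {1..N}" "y' \<in> L" "y = f i y'"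
      using branch_cover y Aset_subset by blast
    have "equiv_bfs N L f x y" using y unfolding Aset_def by blast
    moreover have "equiv_bfs N L f y y'" using equiv_fw[of y' "[i]"] i by simp
    ultimately have "y' \<in> ?C" using equiv_trans i(2) unfolding Aset_def by blast
    then show "y \<in> (\<Union>i\<in>{1..N}. f i ` ?C)" using i by blast
  qed
  then have cover: "(\<Union>i\<in>{1..N}. f i ` ?C) = ?C" using inj by blast
  have "infinite ?C"
  proof
    assume fin: "finite ?C"
    have 12: "1 \<in> {1..N}" "2 \<in> {1..N}" using assms(1) by auto
    have "card ?C + card ?C = card (f 1 ` ?C) + card (f 2 ` ?C)"
      using inj 12 by (simp add: card_image)
    also have "\<dots> = card (f 1 ` ?C \<union> f 2 ` ?C)"
      using disjoint 12 fin by (intro card_Un_disjoint[symmetric]) auto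
    also have "\<dots> \<le> card ?C" using inj 12 fin by (intro card_mono) auto
    finally have "card ?C = 0" by simp
    moreover have "x \<in> ?C" using assms(2) equiv_refl unfolding Aset_def by auto
    ultimately show False using fin by auto
  qed
  then show ?thesis unfolding BFS_def using inj disjoint cover by blast
qed

end

section \<open>Systems of type P(J) with J nonperiodic\<close>

locale P_system = branching_system N L f for N :: nat and L :: "'a set" and f +
  fixes J :: "nat list"
  assumes J_words: "set J \<subseteq> {1..N}" and nonperiodic_J: "nonperiodic J" and P_J: "isP N L f J"
begin

lemma J_nonempty: "J \<noteq> []"
  using nonperiodic_nonempty[OF nonperiodic_J] .

lemma length_J_pos: "0 < length J"
  using J_nonempty by simp

lemma Jext_in_range: "Jext J i \<in> {1..N}"
proof -
  have "(i - 1) mod length J < length J" by (rule mod_less_divisor[OF length_J_pos])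
  then show ?thesis unfolding Jext_def using J_words nth_mem by blast
qed

lemma drop_J_words: "set (drop s J) \<subseteq> {1..N}"
  using J_words by (meson order_trans set_drop_subset)

lemma word_power_J_words: "set (word_power J n) \<subseteq> {1..N}"
  using J_words set_word_power_subset by blast

lemma all_equiv:
  assumes "x \<in> L" and "y \<in> L"
  shows "equiv_bfs N L f x y"
proof -
  obtain x0 where "L = Aset N L f x0" using P_J unfolding isP_def cyclic_def by blast
  then have "equiv_bfs N L f x0 x" and "equiv_bfs N L f x0 y"
    using assms unfolding Aset_def by blast+
  then show ?thesis using equiv_sym equiv_trans by blast
qed

lemma exists_fixed_point: "\<exists>c\<in>L. fw f J c = c"
proof -
  let ?k = "length J"
  obtain n :: "nat \<Rightarrow> 'a" where n: "n ` {1..?k} \<subseteq> L" "f (J ! 0) (n 1) = n ?k"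
    "\<forall>i\<in>{2..?k}. f (J ! (i - 1)) (n i) = n (i - 1)"
    using P_J unfolding isP_def by blast
  have path: "fw f (take s J) (n s) = n ?k" if "1 \<le> s" "s \<le> ?k" for s
    using that
  proof (induction s)
    case (Suc s)
    show ?case
    proof (cases "s = 0")
      case True
      then show ?thesis using n(2) J_nonempty by (simp add: take_Suc_conv_app_nth)
    next
      case False
      then have "f (J ! s) (n (Suc s)) = n s" using n(3)[rule_format, of "Suc s"] Suc.prems by simp
      then show ?thesis using Suc False by (simp add: take_Suc_conv_app_nth fw_append)
    qed
  qed simp
  have "1 \<le> ?k" using Suc_leI[OF length_J_pos] by simp
  then have "fw f J (n ?k) = n ?k" using path[of ?k] by simp
  moreover have "n ?k \<in> L" using n(1) \<open>1 \<le> ?k\<close> by auto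
  ultimately show ?thesis by blast
qed

lemma fixed_point_ancestor:
  assumes c: "c \<in> L" "fw f J c = c" and u: "set u \<subseteq> {1..N}" "y \<in> L" "fw f u y = c"
  shows "y = fw f (drop (length u mod length J) J) c"
proof -
  let ?k = "length J" and ?a = "length u div length J"
  have len: "length u = ?a * ?k + length u mod ?k" by simp
  have "length u mod ?k < ?k" using length_J_pos by simp
  moreover have "length (word_power J (Suc ?a)) = ?a * ?k + ?k" by (simp add: length_word_power)
  ultimately have "length u \<le> length (word_power J (Suc ?a))" using len by linarith
  moreover have "fw f u y = fw f (word_power J (Suc ?a)) c"
    by (simp only: u(3) fw_word_power_fixed[OF c(2)])
  ultimately have "y = fw f (drop (length u) (word_power J (Suc ?a))) c"
    using fw_eq_imp_prefix[OF u(1) word_power_J_words _ u(2) c(1)] by blast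
  also have "drop (length u) (word_power J (Suc ?a)) = drop (length u - ?a * ?k) J"
  proof -
    have "drop (length u) (word_power J ?a) = []"
      by (simp add: length_word_power)
    then show ?thesis by (simp only: word_power_Suc drop_append length_word_power append_Nil)
  qed
  also have "length u - ?a * ?k = length u mod ?k"
    by (rule minus_div_mult_eq_mod)
  finally show ?thesis .
qed

text \<open>This is where nonperiodicity enters: if fw f (drop s J) c is again fixed by fw f J, then
  fw f (rotate s J) fixes it too, so rotate s J = J by unique factorisation.\<close>

lemma fixed_point_drop:
  assumes c: "c \<in> L" "fw f J c = c" and y: "y \<in> L" "fw f J y = y"
    and s: "s < length J" and y_eq: "y = fw f (drop s J) c"
  shows "s = 0"
proof -
  have "fw f (take s J) y = fw f (take s J @ drop s J) c"
    using y_eq by (simp only: fw_append_apply)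
  then have "fw f (take s J) y = c" using c(2) by simp
  then have "fw f (rotate s J) y = fw f J y"
    using y_eq y(2) s by (simp add: rotate_drop_take fw_append)
  then have "rotate s J = J"
    using fw_eq_imp_eq[of "rotate s J" J y y] set_rotate J_words y(1) by auto
  then have "s mod length J = 0" by (rule nonperiodic_rotate[OF nonperiodic_J])
  then show ?thesis using s by simp
qed

lemma fixed_point_unique:
  assumes c: "c \<in> L" "fw f J c = c" and y: "y \<in> L" "fw f J y = y"
  shows "y = c"
proof -
  obtain z U V where z: "z \<in> L" "set U \<subseteq> {1..N}" "set V \<subseteq> {1..N}" "fw f U z = y" "fw f V z = c"
    using all_equiv[OF y(1) c(1)] unfolding equiv_bfs_def by blast
  let ?d = "drop (length V mod length J) J"
  have "z = fw f ?d c" using fixed_point_ancestor[OF c z(3,1,5)] .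
  then have "fw f (U @ ?d) c = y" using z(4) by (simp add: fw_append)
  moreover have "set (U @ ?d) \<subseteq> {1..N}" using z(2) drop_J_words by simp
  ultimately have c_eq: "c = fw f (drop (length (U @ ?d) mod length J) J) y"
    using fixed_point_ancestor[OF y _ c(1)] by blast
  then have "length (U @ ?d) mod length J = 0"
    using length_J_pos by (intro fixed_point_drop[OF y c]) simp_all
  then show ?thesis using c_eq y(2) by simp
qed

definition n0 :: 'a where
  "n0 = (THE n. n \<in> L \<and> fw f J n = n)"

lemma n0: "n0 \<in> L" "fw f J n0 = n0"
proof -
  obtain c where "c \<in> L" "fw f J c = c" using exists_fixed_point by blast
  moreover then have "n0 = c" unfolding n0_def using fixed_point_unique by blast
  ultimately show "n0 \<in> L" "fw f J n0 = n0" by auto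
qed

lemma n0_ancestor:
  "set u \<subseteq> {1..N} \<Longrightarrow> y \<in> L \<Longrightarrow> fw f u y = n0 \<Longrightarrow> y = fw f (drop (length u mod length J) J) n0"
  using fixed_point_ancestor[OF n0] by blast

lemma fw_n0_eq_n0_imp_power:
  assumes u: "set u \<subseteq> {1..N}" and fix_n0: "fw f u n0 = n0"
  shows "\<exists>b. u = word_power J b"
proof -
  let ?k = "length J"
  have "n0 = fw f (drop (length u mod ?k) J) n0" using n0_ancestor[OF u n0(1) fix_n0] .
  then have "length u mod ?k = 0" using length_J_pos by (intro fixed_point_drop[OF n0 n0]) simp_all
  then have len: "length u = length (word_power J (length u div ?k))"
    using div_mult_mod_eq[of "length u" ?k] by (simp add: length_word_power)
  have "fw f u n0 = fw f (word_power J (length u div ?k)) n0"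
    using fix_n0 fw_word_power_fixed[OF n0(2)] by simp
  then show ?thesis using fw_eq_imp_eq[OF u word_power_J_words len n0(1) n0(1)] by blast
qed

lemma descends_from_n0:
  assumes x: "x \<in> L"
  shows "\<exists>w. set w \<subseteq> {1..N} \<and> m \<le> length w \<and> x = fw f w n0"
proof -
  obtain z U V where z: "z \<in> L" "set U \<subseteq> {1..N}" "set V \<subseteq> {1..N}" "fw f U z = x" "fw f V z = n0"
    using all_equiv[OF x n0(1)] unfolding equiv_bfs_def by blast
  let ?w = "U @ drop (length V mod length J) J @ word_power J m"
  have "x = fw f ?w n0"
    using n0_ancestor[OF z(3,1,5)] z(4) fw_word_power_fixed[OF n0(2)] by (simp add: fw_append)
  moreover have "m \<le> length ?w"
  proof -
    have "m * 1 \<le> m * length J" using Suc_leI[OF length_J_pos] by (intro mult_le_mono2) simp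
    then show ?thesis unfolding length_append length_word_power by linarith
  qed
  moreover have "set ?w \<subseteq> {1..N}" using z(2) drop_J_words word_power_J_words by simp
  ultimately show ?thesis by blast
qed

end

section \<open>The permuted system and its semi-Mealy machine\<close>

locale permuted_branching_system = branching_system N L f for N :: nat and L :: "'a set" and f +
  fixes l :: nat and \<sigma> :: "nat list \<Rightarrow> nat list"
  assumes l_pos: "0 < l" and perm: "perm_words N l \<sigma>"
begin

abbreviation "fs \<equiv> fsig N L f l \<sigma>"
abbreviation "equiv_fs \<equiv> equiv_bfs N L fs"

lemma bij_\<sigma>: "bij_betw \<sigma> (words N l) (words N l)"
  using perm by (simp add: perm_words_def)

lemma Cons_in_words: "i \<in> {1..N} \<Longrightarrow> K \<in> words N (l - 1) \<Longrightarrow> i # K \<in> words N l"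
  using l_pos by (auto simp: words_def)

lemma snoc_in_words: "K \<in> words N (l - 1) \<Longrightarrow> i \<in> {1..N} \<Longrightarrow> K @ [i] \<in> words N l"
  using l_pos by (auto simp: words_def)

lemma \<sigma>_Cons_in_words: "i \<in> {1..N} \<Longrightarrow> K \<in> words N (l - 1) \<Longrightarrow> \<sigma> (i # K) \<in> words N l"
  using bij_\<sigma> Cons_in_words bij_betwE by blast

lemma \<sigma>_Cons_eq_iff:
  "i \<in> {1..N} \<Longrightarrow> K \<in> words N (l - 1) \<Longrightarrow> j \<in> {1..N} \<Longrightarrow> K' \<in> words N (l - 1)
    \<Longrightarrow> \<sigma> (i # K) = \<sigma> (j # K') \<longleftrightarrow> i = j \<and> K = K'"
  using bij_\<sigma> Cons_in_words by (auto simp: bij_betw_def dest: inj_onD)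

lemma exists_fw_state: "x \<in> L \<Longrightarrow> \<exists>K y. K \<in> words N (l - 1) \<and> y \<in> L \<and> x = fw f K y"
  using exists_fw_ancestor[of x "l - 1"] by (auto simp: words_def)

lemma fsig_fw: "K \<in> words N (l - 1) \<Longrightarrow> y \<in> L \<Longrightarrow> fs i (fw f K y) = fw f (\<sigma> (i # K)) y"
  unfolding fsig_def by (rule the_equality) (use fw_words_eq_imp_eq in blast)+

lemma fsig_closed: "i \<in> {1..N} \<Longrightarrow> x \<in> L \<Longrightarrow> fs i x \<in> L"
  using exists_fw_state fsig_fw \<sigma>_Cons_in_words fw_words_closed by metis

lemma fsig_eq_iff:
  assumes "i \<in> {1..N}" "j \<in> {1..N}" "x \<in> L" "x' \<in> L"
  shows "fs i x = fs j x' \<longleftrightarrow> i = j \<and> x = x'"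
proof -
  obtain K y K' y' where K: "K \<in> words N (l - 1)" "y \<in> L" "x = fw f K y"
    and K': "K' \<in> words N (l - 1)" "y' \<in> L" "x' = fw f K' y'"
    using exists_fw_state assms(3,4) by metis
  have "fs i x = fs j x' \<longleftrightarrow> \<sigma> (i # K) = \<sigma> (j # K') \<and> y = y'"
    using K K' fsig_fw fw_words_eq_imp_eq[OF \<sigma>_Cons_in_words \<sigma>_Cons_in_words] assms(1,2) by auto
  also have "\<dots> \<longleftrightarrow> i = j \<and> x = x'"
    using \<sigma>_Cons_eq_iff[OF assms(1) K(1) assms(2) K'(1)] fw_words_eq_imp_eq K K' by auto
  finally show ?thesis .
qed

lemma fsig_cover: "x \<in> L \<Longrightarrow> \<exists>i\<in>{1..N}. \<exists>y\<in>L. x = fs i y"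
proof -
  assume "x \<in> L"
  then obtain W y where W: "W \<in> words N l" "y \<in> L" "x = fw f W y"
    using exists_fw_ancestor[of x l] by (auto simp: words_def)
  then obtain V where V: "V \<in> words N l" "W = \<sigma> V"
    using bij_\<sigma> by (metis bij_betw_imp_surj_on imageE)
  then obtain i K where "V = i # K" "i \<in> {1..N}" "K \<in> words N (l - 1)"
    using l_pos by (cases V) (auto simp: words_def)
  then show ?thesis using W V fsig_fw fw_words_closed by metis
qed

lemma BFS_fsig: "BFS N L fs"
proof -
  have "\<forall>i\<in>{1..N}. inj_on (fs i) L \<and> fs i ` L \<subseteq> L"
    using fsig_eq_iff fsig_closed by (auto intro: inj_onI)
  moreover have "\<forall>i\<in>{1..N}. \<forall>j\<in>{1..N}. i \<noteq> j \<longrightarrow> fs i ` L \<inter> fs j ` L = {}"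
    using fsig_eq_iff by blast
  moreover have "(\<Union>i\<in>{1..N}. fs i ` L) = L"
    using fsig_closed fsig_cover by blast
  ultimately show ?thesis using BFS unfolding BFS_def by blast
qed

sublocale sig: branching_system N L fs
  by unfold_locales (rule BFS_fsig)

lemma delta_spec:
  assumes K: "K \<in> words N (l - 1)" and i: "i \<in> {1..N}"
  shows "\<exists>y\<in>{1..N}. delta N l \<sigma> K i \<in> words N (l - 1) \<and> \<sigma> (y # delta N l \<sigma> K i) = K @ [i]"
proof -
  have Ki: "K @ [i] \<in> \<sigma> ` words N l" using snoc_in_words[OF K i] bij_\<sigma> by (simp add: bij_betw_def)
  let ?V = "inv_into (words N l) \<sigma> (K @ [i])"
  have V: "?V \<in> words N l" "\<sigma> ?V = K @ [i]"
    using inv_into_into[OF Ki] f_inv_into_f[OF Ki] by auto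
  then obtain y T where "?V = y # T" using l_pos by (cases ?V) (auto simp: words_def)
  moreover have "delta N l \<sigma> K i = tl ?V" by (simp add: delta_def)
  ultimately show ?thesis using V by (auto simp: words_def)
qed

lemma delta_in_words: "K \<in> words N (l - 1) \<Longrightarrow> i \<in> {1..N} \<Longrightarrow> delta N l \<sigma> K i \<in> words N (l - 1)"
  using delta_spec by blast

lemma deltaw_in_words:
  "K \<in> words N (l - 1) \<Longrightarrow> set w \<subseteq> {1..N} \<Longrightarrow> deltaw N l \<sigma> K w \<in> words N (l - 1)"
proof (induction w arbitrary: K)
  case (Cons i w)
  then show ?case using Cons.IH[OF delta_in_words[OF Cons.prems(1)]] by (simp add: deltaw_Cons)
qed (simp add: deltaw_Nil)

lemma delta_\<sigma>_Cons:
  "i \<in> {1..N} \<Longrightarrow> K \<in> words N (l - 1) \<Longrightarrow> \<sigma> (i # K) = K' @ [c] \<Longrightarrow> delta N l \<sigma> K' c = K"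
  unfolding delta_def using bij_\<sigma> Cons_in_words[of i K]
  by (metis bij_betw_def inv_into_f_f list.sel(3))

text \<open>The machine tracks fsig: if \<sigma>(y, \<delta>(K, i)) = (K, i), then fsig y maps
  fw f (\<delta>(K, i)) z to fw f K (f i z).\<close>

lemma equiv_fs_delta:
  assumes K: "K \<in> words N (l - 1)" and i: "i \<in> {1..N}" and z: "z \<in> L"
  shows "equiv_fs (fw f K (f i z)) (fw f (delta N l \<sigma> K i) z)"
proof -
  obtain y where y: "y \<in> {1..N}" "delta N l \<sigma> K i \<in> words N (l - 1)"
    "\<sigma> (y # delta N l \<sigma> K i) = K @ [i]"
    using delta_spec[OF K i] by blast
  have eq: "fw f K (f i z) = fw fs [y] (fw f (delta N l \<sigma> K i) z)"
    using fsig_fw[OF y(2) z] y(3) by (simp add: fw_append)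
  show ?thesis
    unfolding eq using sig.equiv_fw[OF fw_words_closed[OF y(2) z], of "[y]"] y(1) by simp
qed

lemma equiv_fs_deltaw:
  assumes "K \<in> words N (l - 1)" "set w \<subseteq> {1..N}" "z \<in> L"
  shows "equiv_fs (fw f K (fw f w z)) (fw f (deltaw N l \<sigma> K w) z)"
  using assms
proof (induction w arbitrary: K)
  case Nil
  then show ?case using sig.equiv_refl fw_words_closed by (simp add: deltaw_Nil)
next
  case (Cons i w)
  then have i: "i \<in> {1..N}" and w: "set w \<subseteq> {1..N}" by auto
  have "equiv_fs (fw f K (f i (fw f w z))) (fw f (delta N l \<sigma> K i) (fw f w z))"
    using equiv_fs_delta[OF Cons.prems(1) i fw_closed[OF w Cons.prems(3)]] .
  moreover have "equiv_fs (fw f (delta N l \<sigma> K i) (fw f w z)) (fw f (deltaw N l \<sigma> (delta N l \<sigma> K i) w) z)"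
    using Cons.IH[OF delta_in_words[OF Cons.prems(1) i] w Cons.prems(3)] .
  ultimately have "equiv_fs (fw f K (f i (fw f w z))) (fw f (deltaw N l \<sigma> (delta N l \<sigma> K i) w) z)"
    by (rule sig.equiv_trans)
  then show ?case by (simp add: deltaw_Cons)
qed

lemma fsig_fw_deltaw:
  assumes "set U \<subseteq> {1..N}" "K \<in> words N (l - 1)" "z \<in> L"
  shows "\<exists>K' u. K' \<in> words N (l - 1) \<and> set u \<subseteq> {1..N} \<and> deltaw N l \<sigma> K' u = K
     \<and> fw fs U (fw f K z) = fw f K' (fw f u z)"
  using assms
proof (induction U)
  case Nil
  then show ?case by (intro exI[of _ K] exI[of _ "[]"]) (simp add: deltaw_Nil)
next
  case (Cons i U)
  then obtain K1 u1 where IH: "K1 \<in> words N (l - 1)" "set u1 \<subseteq> {1..N}"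
    "deltaw N l \<sigma> K1 u1 = K" "fw fs U (fw f K z) = fw f K1 (fw f u1 z)" by auto
  have i: "i \<in> {1..N}" using Cons.prems by simp
  have W: "\<sigma> (i # K1) \<in> words N l" using \<sigma>_Cons_in_words[OF i IH(1)] .
  moreover have "\<sigma> (i # K1) \<noteq> []" using W l_pos by (auto simp: words_def)
  ultimately obtain K2 c where Kc: "\<sigma> (i # K1) = K2 @ [c]" by (metis rev_exhaust)
  then have K2: "K2 \<in> words N (l - 1)" and c: "c \<in> {1..N}" using W by (auto simp: words_def)
  have "fw fs (i # U) (fw f K z) = fw f (\<sigma> (i # K1)) (fw f u1 z)"
    using IH(4) fsig_fw[OF IH(1) fw_closed[OF IH(2) Cons.prems(3)]] by simp
  then have "fw fs (i # U) (fw f K z) = fw f K2 (fw f (c # u1) z)"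
    using Kc by (simp add: fw_append)
  moreover have "deltaw N l \<sigma> K2 (c # u1) = K"
    using delta_\<sigma>_Cons[OF i IH(1) Kc] IH(3) by (simp add: deltaw_Cons)
  ultimately show ?case using K2 c IH(2) by (intro exI[of _ K2] exI[of _ "c # u1"]) auto
qed

end

section \<open>Decomposition along the classes of Q_J\<close>

locale permuted_P_system = P_system N L f J + permuted_branching_system N L f l \<sigma>
  for N :: nat and L :: "'a set" and f J l \<sigma>
begin

abbreviation run_J :: "nat list \<Rightarrow> nat list" where
  "run_J q \<equiv> deltaw N l \<sigma> q J"

lemma deltaw_word_power: "deltaw N l \<sigma> q (word_power J n) = (run_J ^^ n) q"
  by (induction n) (simp_all add: word_power_Suc deltaw_append deltaw_Nil del: replicate_Suc)

lemma funpow_run_J_in_words: "q \<in> words N (l - 1) \<Longrightarrow> (run_J ^^ n) q \<in> words N (l - 1)"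
proof (induction n)
  case (Suc n)
  then show ?case using deltaw_in_words[OF Suc.IH J_words] by simp
qed simp

lemma qclass_eq_orbit: "qclass N l \<sigma> J q = orbit run_J q"
  unfolding qclass_def orbit_altdef deltaw_word_power by (auto simp: Suc_le_eq)

lemma QJ_iff: "q \<in> QJ N l \<sigma> J \<longleftrightarrow> q \<in> words N (l - 1) \<and> q \<in> orbit run_J q"
  unfolding QJ_def orbit_altdef deltaw_word_power by (auto simp: Suc_le_eq) metis

text \<open>Appending J to a path into n0 does not change the endpoint, but runs the machine once around J.\<close>

lemma equiv_fs_funpow_run_J:
  assumes "q \<in> words N (l - 1)"
  shows "equiv_fs (fw f q n0) (fw f ((run_J ^^ a) q) n0)"
  using equiv_fs_deltaw[OF assms word_power_J_words n0(1), of a]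
  by (simp add: fw_word_power_fixed[OF n0(2)] deltaw_word_power)

lemma mpt_equiv:
  assumes "p \<in> QJ N l \<sigma> J"
  shows "mpt N L f l \<sigma> J p \<in> L \<and> equiv_fs (mpt N L f l \<sigma> J p) (fw f p n0)"
proof -
  have p: "p \<in> words N (l - 1)" "p \<in> orbit run_J p" using assms QJ_iff by auto
  let ?r = "card (qclass N l \<sigma> J p)"
  have "0 < ?r" unfolding qclass_eq_orbit using finite_orbit[OF p(2)] orbit_nonempty
    by (simp add: card_gt_0_iff)
  then obtain m where m: "?r * length J = Suc m" using length_J_pos
    by (metis gr0_implies_Suc nat_0_less_mult_iff)
  let ?q = "deltaw N l \<sigma> p (map (Jext J) [1..<Suc m])" and ?j = "Jext J (Suc m)"
  have q: "?q \<in> words N (l - 1)"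
    by (rule deltaw_in_words[OF p(1)]) (use Jext_in_range in auto)
  have j: "?j \<in> {1..N}" by (rule Jext_in_range)
  have mpt: "mpt N L f l \<sigma> J p = fw f ?q (f ?j n0)"
    unfolding mpt_def Let_def n0_def[symmetric] m pseq_Suc by (simp add: fw_append)
  txt \<open>m(p) is one machine step short of running p once around J^r, and r = #[p] is a period of p.\<close>
  have "delta N l \<sigma> ?q ?j = deltaw N l \<sigma> p (map (Jext J) [1..<Suc (?r * length J)])"
    unfolding m by (simp add: deltaw_append deltaw_Cons deltaw_Nil)
  also have "\<dots> = p"
    unfolding map_Jext_word_power deltaw_word_power qclass_eq_orbit using funpow_card_orbit[OF p(2)] .
  finally show ?thesis
    using mpt equiv_fs_delta[OF q j n0(1)] fw_words_closed[OF q branch_closed[OF j n0(1)]] by simp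
qed

lemma mem_Lam_iff:
  assumes "p \<in> QJ N l \<sigma> J"
  shows "x \<in> Lam N L f l \<sigma> J p \<longleftrightarrow> x \<in> L \<and> equiv_fs (fw f p n0) x"
  using mpt_equiv[OF assms] sig.equiv_sym sig.equiv_trans unfolding Lam_def Aset_def by blast

lemma BFS_Lam: "N \<ge> 2 \<Longrightarrow> p \<in> QJ N l \<sigma> J \<Longrightarrow> BFS N (Lam N L f l \<sigma> J p) fs"
  unfolding Lam_def using sig.BFS_Aset mpt_equiv by blast

lemma Lam_closed: "x \<in> Lam N L f l \<sigma> J p \<Longrightarrow> i \<in> {1..N} \<Longrightarrow> fs i x \<in> Lam N L f l \<sigma> J p"
  unfolding Lam_def by (rule sig.Aset_closed)

text \<open>Write x = fw f (K @ v) n0 with K a state; then x is equivalent to fw f (\<delta>(K, v)) n0, and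
  running around J from there eventually reaches a periodic state.\<close>

lemma exists_equiv_QJ:
  assumes x: "x \<in> L"
  shows "\<exists>q\<in>QJ N l \<sigma> J. equiv_fs (fw f q n0) x"
proof -
  obtain w where w: "set w \<subseteq> {1..N}" "l - 1 \<le> length w" "x = fw f w n0"
    using descends_from_n0[OF x] by blast
  let ?K = "take (l - 1) w" and ?v = "drop (l - 1) w"
  have K: "?K \<in> words N (l - 1)" using w(1,2) set_take_subset[of "l - 1" w] by (auto simp: words_def)
  have v: "set ?v \<subseteq> {1..N}" using w(1) set_drop_subset[of "l - 1" w] by blast
  let ?q0 = "deltaw N l \<sigma> ?K ?v"
  have x_q0: "equiv_fs x (fw f ?q0 n0)"
    using equiv_fs_deltaw[OF K v n0(1)] w(3) by (simp flip: fw_append_apply)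
  have q0: "?q0 \<in> words N (l - 1)" using deltaw_in_words[OF K v] .
  obtain a where a: "(run_J ^^ a) ?q0 \<in> orbit run_J ((run_J ^^ a) ?q0)"
    using funpow_eventually_in_own_orbit[OF finite_words funpow_run_J_in_words[OF q0]] by blast
  then have "(run_J ^^ a) ?q0 \<in> QJ N l \<sigma> J"
    using QJ_iff funpow_run_J_in_words[OF q0] by blast
  moreover have "equiv_fs (fw f ((run_J ^^ a) ?q0) n0) x"
    using sig.equiv_trans[OF x_q0 equiv_fs_funpow_run_J[OF q0]] sig.equiv_sym by blast
  ultimately show ?thesis by blast
qed

text \<open>Conversely, a path under fsig between two states p, p' lifts to paths u, u' under f ending
  in n0 from a common point; completing both to powers of J shows that the machine runs p and p'
  into the same state.\<close>

lemma orbits_meet_if_equiv_fs: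
  assumes p: "p \<in> words N (l - 1)" and p': "p' \<in> words N (l - 1)"
    and equiv: "equiv_fs (fw f p n0) (fw f p' n0)"
  shows "orbit run_J p \<inter> orbit run_J p' \<noteq> {}"
proof -
  obtain z U U' where z: "z \<in> L" "set U \<subseteq> {1..N}" "set U' \<subseteq> {1..N}"
    "fw fs U z = fw f p n0" "fw fs U' z = fw f p' n0"
    using equiv unfolding equiv_bfs_def by blast
  obtain K y where K: "K \<in> words N (l - 1)" "y \<in> L" "z = fw f K y" using exists_fw_state[OF z(1)] by blast
  obtain K1 u where u: "K1 \<in> words N (l - 1)" "set u \<subseteq> {1..N}" "deltaw N l \<sigma> K1 u = K"
    "fw fs U (fw f K y) = fw f K1 (fw f u y)"
    using fsig_fw_deltaw[OF z(2) K(1,2)] by blast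
  obtain K1' u' where u': "K1' \<in> words N (l - 1)" "set u' \<subseteq> {1..N}" "deltaw N l \<sigma> K1' u' = K"
    "fw fs U' (fw f K y) = fw f K1' (fw f u' y)"
    using fsig_fw_deltaw[OF z(3) K(1,2)] by blast
  have "K1 = p" "fw f u y = n0"
    using fw_words_eq_imp_eq[OF u(1) p fw_closed[OF u(2) K(2)] n0(1)] u(4) z(4) K(3) by auto
  have "K1' = p'" "fw f u' y = n0"
    using fw_words_eq_imp_eq[OF u'(1) p' fw_closed[OF u'(2) K(2)] n0(1)] u'(4) z(5) K(3) by auto
  let ?d = "drop (length u mod length J) J"
  have y: "y = fw f ?d n0" using n0_ancestor[OF u(2) K(2) \<open>fw f u y = n0\<close>] .
  have "length u mod length J < length J" by (rule mod_less_divisor[OF length_J_pos])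
  then have "?d \<noteq> []" by simp
  obtain b where b: "u @ ?d = word_power J b"
    using fw_n0_eq_n0_imp_power[of "u @ ?d"] u(2) drop_J_words y \<open>fw f u y = n0\<close>
    by (auto simp: fw_append)
  obtain b' where b': "u' @ ?d = word_power J b'"
    using fw_n0_eq_n0_imp_power[of "u' @ ?d"] u'(2) drop_J_words y \<open>fw f u' y = n0\<close>
    by (auto simp: fw_append)
  have "0 < b" "0 < b'" using b b' \<open>?d \<noteq> []\<close> by (auto intro: gr0I)
  have "(run_J ^^ b) p = (run_J ^^ b') p'"
    using b b' u(3) u'(3) \<open>K1 = p\<close> \<open>K1' = p'\<close>
    by (metis deltaw_word_power deltaw_append)
  then show ?thesis using \<open>0 < b\<close> \<open>0 < b'\<close> unfolding orbit_altdef by blast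
qed

lemma Lam_cover:
  assumes p_QJ: "\<forall>i\<in>I. p i \<in> QJ N l \<sigma> J"
    and classes_cover: "QJ N l \<sigma> J = (\<Union>i\<in>I. qclass N l \<sigma> J (p i))"
  shows "L = (\<Union>i\<in>I. Lam N L f l \<sigma> J (p i))"
proof (intro equalityI subsetI)
  fix x assume "x \<in> L"
  then obtain q where q: "q \<in> QJ N l \<sigma> J" "equiv_fs (fw f q n0) x" using exists_equiv_QJ by blast
  then obtain i n where i: "i \<in> I" "q = (run_J ^^ n) (p i)"
    using classes_cover unfolding qclass_eq_orbit orbit_altdef by blast
  have "p i \<in> words N (l - 1)" using p_QJ i(1) QJ_iff by blast
  then have "equiv_fs (fw f (p i) n0) x"
    using sig.equiv_trans[OF equiv_fs_funpow_run_J] q(2) i(2) by blast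
  then show "x \<in> (\<Union>i\<in>I. Lam N L f l \<sigma> J (p i))"
    using i(1) p_QJ mem_Lam_iff \<open>x \<in> L\<close> by blast
qed (use p_QJ mem_Lam_iff in blast)

lemma Lam_disjoint:
  assumes p: "p \<in> QJ N l \<sigma> J" and p': "p' \<in> QJ N l \<sigma> J"
    and classes_disjoint: "qclass N l \<sigma> J p \<inter> qclass N l \<sigma> J p' = {}"
  shows "Lam N L f l \<sigma> J p \<inter> Lam N L f l \<sigma> J p' = {}"
proof (rule ccontr)
  assume "Lam N L f l \<sigma> J p \<inter> Lam N L f l \<sigma> J p' \<noteq> {}"
  then obtain x where "equiv_fs (fw f p n0) x" "equiv_fs (fw f p' n0) x"
    using mem_Lam_iff[OF p] mem_Lam_iff[OF p'] by blast
  then have "equiv_fs (fw f p n0) (fw f p' n0)" by (metis sig.equiv_trans sig.equiv_sym)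
  then have "orbit run_J p \<inter> orbit run_J p' \<noteq> {}"
    using orbits_meet_if_equiv_fs p p' QJ_iff by blast
  then show False using classes_disjoint unfolding qclass_eq_orbit by blast
qed

end

theorem lemma3p1:
  fixes N l M :: nat and \<sigma> :: "nat list \<Rightarrow> nat list" and J :: "nat list"
    and L :: "'a set" and f :: "nat \<Rightarrow> 'a \<Rightarrow> 'a" and p :: "nat \<Rightarrow> nat list"
  assumes "N \<ge> 2" and "l \<ge> 2"
    and "perm_words N l \<sigma>"
    and "J \<noteq> []" and "set J \<subseteq> {1..N}" and "nonperiodic J"
    and "BFS N L f" and "isP N L f J"
    and "\<forall>i\<in>{1..M}. p i \<in> QJ N l \<sigma> J"
    and "\<forall>i\<in>{1..M}. \<forall>j\<in>{1..M}. i \<noteq> j \<longrightarrow> qclass N l \<sigma> J (p i) \<inter> qclass N l \<sigma> J (p j) = {}"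
    and "QJ N l \<sigma> J = (\<Union>i\<in>{1..M}. qclass N l \<sigma> J (p i))"
  shows "L = (\<Union>i\<in>{1..M}. Lam N L f l \<sigma> J (p i))
    \<and> (\<forall>i\<in>{1..M}. \<forall>j\<in>{1..M}. i \<noteq> j \<longrightarrow> Lam N L f l \<sigma> J (p i) \<inter> Lam N L f l \<sigma> J (p j) = {})
    \<and> direct_sum N L (fsig N L f l \<sigma>) {1..M} (\<lambda>i. Lam N L f l \<sigma> J (p i))"
proof -
  interpret permuted_P_system N L f J l \<sigma>
    using assms(2,3,5-8) by unfold_locales auto
  note p_QJ = assms(9)
  have cover: "L = (\<Union>i\<in>{1..M}. Lam N L f l \<sigma> J (p i))"
    using Lam_cover[OF p_QJ assms(11)] .
  moreover have "\<forall>i\<in>{1..M}. \<forall>j\<in>{1..M}. i \<noteq> j \<longrightarrow> Lam N L f l \<sigma> J (p i) \<inter> Lam N L f l \<sigma> J (p j) = {}"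
    using Lam_disjoint p_QJ assms(10) by blast
  moreover have "\<forall>\<omega>\<in>{1..M}. \<forall>i\<in>{1..N}. fs i ` Lam N L f l \<sigma> J (p \<omega>) \<subseteq> Lam N L f l \<sigma> J (p \<omega>)"
    using Lam_closed by blast
  moreover have "\<forall>\<omega>\<in>{1..M}. BFS N (Lam N L f l \<sigma> J (p \<omega>)) fs"
    using BFS_Lam[OF assms(1)] p_QJ by blast
  ultimately show ?thesis
    unfolding direct_sum_def by blast
qed

end
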